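(* Let $\mathcal{Y}=\mathbb{R}$, $K\ge1$, $\alpha\in(0,1)$, let $(q_1,\dots,q_K)$ be a probability vector, and let $n_1,\dots,n_K\ge0$ be fixed integers with $n=\sum_k n_k$. For distributions $\Pi_1,\dots,\Pi_K$ on $\mathcal{X}^1\times\mathbb{R}$, consider calibration data $(X_1,Y_1),\dots,(X_n,Y_n)$ generated independently with, for each $k$ and each $i\in\{n_1+\dots+n_{k-1}+1,\dots,n_1+\dots+n_k\}$, $X_i^0=k$ and $(X_i^1,Y_i)\sim\Pi_k$, and an independent test point $(X_{n+1},Y_{n+1})$ with $\mathbb{P}\{X^0_{n+1}=k\}=q_k$ and $(X^1_{n+1},Y_{n+1})\mid X^0_{n+1}=k\sim\Pi_k$. Let $\widehat{C}_n$ be a prediction set procedure (a set $\widehat{C}_n(x)\subseteq\mathbb{R}$ constructed from the calibration data for each $x$) satisfying the distribution-free coverage guarantee $\mathbb{P}\{Y_{n+1}\in\widehat{C}_n(X_{n+1})\}\ge1-\alpha$ under this data-generating model for every choice of $\Pi_1,\dots,\Pi_K$. If $\sum_{k:\,n_k=0}q_k>\alpha$, then (for any $\Pi_1,\dots,\Pi_K$) $\mathbb{E}[\textnormal{Leb}(\widehat{C}_n(X_{n+1}))]=\infty$.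
   Context: Features are $x=(x^0,x^1)\in[K]\times\mathcal{X}^1$ with $x^0$ the group label. $\textnormal{Leb}$ denotes Lebesgue measure on $\mathbb{R}$. *)

theory Defs
  imports "HOL-Probability.Probability"
begin

text \<open>A data point is ((x0, x1), y) with x0 :: nat the group label (in 1..K),
  x1 in the measurable space M1 (the space X^1), and y real.\<close>

definition point_space :: "'x measure \<Rightarrow> ((nat \<times> 'x) \<times> real) measure" where
  "point_space M1 = (count_space UNIV \<Otimes>\<^sub>M M1) \<Otimes>\<^sub>M borel"

definition embed_grp :: "nat \<Rightarrow> 'x \<times> real \<Rightarrow> (nat \<times> 'x) \<times> real" where
  "embed_grp k = (\<lambda>(x1, y). ((k, x1), y))"

definition group_dist ::
  "'x measure \<Rightarrow> (nat \<Rightarrow> ('x \<times> real) measure) \<Rightarrow> nat \<Rightarrow> ((nat \<times> 'x) \<times> real) measure" where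
  "group_dist M1 P k = distr (P k) (point_space M1) (embed_grp k)"

definition test_dist ::
  "'x measure \<Rightarrow> nat \<Rightarrow> (nat \<Rightarrow> real) \<Rightarrow> (nat \<Rightarrow> ('x \<times> real) measure)
     \<Rightarrow> ((nat \<times> 'x) \<times> real) measure" where
  "test_dist M1 K q P = measure_of (space (point_space M1)) (sets (point_space M1))
     (\<lambda>A. \<Sum>k\<in>{1..K}. ennreal (q k) * emeasure (group_dist M1 P k) A)"

text \<open>Group of calibration index i (0-based): the k with
  n_1+...+n_{k-1} \<le> i < n_1+...+n_k.\<close>
definition grp :: "(nat \<Rightarrow> nat) \<Rightarrow> nat \<Rightarrow> nat" where
  "grp nk i = (LEAST k. i < (\<Sum>j\<in>{1..k}. nk j))"

definition cal_dist ::
  "'x measure \<Rightarrow> (nat \<Rightarrow> nat) \<Rightarrow> nat \<Rightarrow> (nat \<Rightarrow> ('x \<times> real) measure)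
     \<Rightarrow> (nat \<Rightarrow> (nat \<times> 'x) \<times> real) measure" where
  "cal_dist M1 nk n P = (\<Pi>\<^sub>M i\<in>{..<n}. group_dist M1 P (grp nk i))"

definition joint_dist ::
  "'x measure \<Rightarrow> nat \<Rightarrow> (nat \<Rightarrow> real) \<Rightarrow> (nat \<Rightarrow> nat) \<Rightarrow> nat \<Rightarrow> (nat \<Rightarrow> ('x \<times> real) measure)
     \<Rightarrow> ((nat \<Rightarrow> (nat \<times> 'x) \<times> real) \<times> ((nat \<times> 'x) \<times> real)) measure" where
  "joint_dist M1 K q nk n P = cal_dist M1 nk n P \<Otimes>\<^sub>M test_dist M1 K q P"

definition joint_space ::
  "'x measure \<Rightarrow> nat \<Rightarrow> ((nat \<Rightarrow> (nat \<times> 'x) \<times> real) \<times> ((nat \<times> 'x) \<times> real)) measure" where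
  "joint_space M1 n = (\<Pi>\<^sub>M i\<in>{..<n}. point_space M1) \<Otimes>\<^sub>M point_space M1"

definition valid_dists :: "'x measure \<Rightarrow> nat \<Rightarrow> (nat \<Rightarrow> ('x \<times> real) measure) \<Rightarrow> bool" where
  "valid_dists M1 K P \<longleftrightarrow>
     (\<forall>k\<in>{1..K}. prob_space (P k) \<and> sets (P k) = sets (M1 \<Otimes>\<^sub>M borel))"

end

(*
  Groups with n_k = 0 never occur in the calibration sample. Replacing, in those groups only,
  the law of (X^1, Y) by (law of X^1) x Unif[0, L] therefore leaves the law of the calibration
  data unchanged, so the coverage guarantee still applies. For a test point from such a group,
  the chance that the uniform response falls into the set is at most its Lebesgue measure
  divided by L, and the features have the same law as under the original distributions. Hence
  1 - alpha <= (1 - Q0) + E[Leb(C_n(X_{n+1}))] / L for every L > 0, where Q0 is the total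
  weight of the empty groups; since Q0 > alpha, the expectation must be infinite.
*)
theory Submission
  imports Defs
begin

lemma grp_mem_groups:
  fixes nk :: "nat \<Rightarrow> nat"
  assumes i: "i < (\<Sum>k\<in>{1..K}. nk k)"
  shows "grp nk i \<in> {1..K}" and "nk (grp nk i) \<noteq> 0"
proof -
  let ?S = "\<lambda>k. \<Sum>j\<in>{1..k}. nk j"
  have below: "i < ?S (grp nk i)"
    unfolding grp_def using i by (rule LeastI)
  then have "grp nk i \<noteq> 0" by (intro notI) simp
  moreover have "grp nk i \<le> K"
    unfolding grp_def using i by (rule Least_le)
  ultimately show "grp nk i \<in> {1..K}" by simp
  from \<open>grp nk i \<noteq> 0\<close> obtain m where m: "grp nk i = Suc m"
    using not0_implies_Suc by blast
  then have "\<not> i < ?S m"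
    using not_less_Least[of m "\<lambda>k. i < ?S k"] unfolding grp_def by simp
  then show "nk (grp nk i) \<noteq> 0"
    using below m by simp
qed

lemma sets_group_dist [simp]: "sets (group_dist M1 P k) = sets (point_space M1)"
  by (simp add: group_dist_def)

lemma space_group_dist [simp]: "space (group_dist M1 P k) = space (point_space M1)"
  by (simp add: group_dist_def)

lemma space_point_space: "space (point_space M1) = (UNIV \<times> space M1) \<times> UNIV"
  by (simp add: point_space_def space_pair_measure)

lemma measurable_embed_grp:
  assumes "sets N = sets (M1 \<Otimes>\<^sub>M borel)"
  shows "embed_grp k \<in> measurable N (point_space M1)"
proof -
  have "embed_grp k \<in> measurable (M1 \<Otimes>\<^sub>M borel) (point_space M1)"
    unfolding embed_grp_def point_space_def by measurable
  then show ?thesis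
    using measurable_cong_sets[OF assms refl] by blast
qed

lemma prob_space_group_dist:
  assumes "prob_space (P k)" "sets (P k) = sets (M1 \<Otimes>\<^sub>M borel)"
  shows "prob_space (group_dist M1 P k)"
  unfolding group_dist_def
  by (rule prob_space.prob_space_distr[OF assms(1) measurable_embed_grp[OF assms(2)]])

lemma sets_test_dist [simp]: "sets (test_dist M1 K q P) = sets (point_space M1)"
  unfolding test_dist_def by (simp add: sets.sigma_sets_eq sets.space_closed)

lemma space_test_dist [simp]: "space (test_dist M1 K q P) = space (point_space M1)"
  unfolding test_dist_def by simp

lemma emeasure_test_dist:
  assumes A: "A \<in> sets (point_space M1)"
  shows "emeasure (test_dist M1 K q P) A
           = (\<Sum>k\<in>{1..K}. ennreal (q k) * emeasure (group_dist M1 P k) A)"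
  unfolding test_dist_def
proof (rule emeasure_measure_of_sigma[OF sets.sigma_algebra_axioms _ _ A])
  show "positive (sets (point_space M1))
          (\<lambda>A. \<Sum>k\<in>{1..K}. ennreal (q k) * emeasure (group_dist M1 P k) A)"
    by (simp add: positive_def)
  show "countably_additive (sets (point_space M1))
          (\<lambda>A. \<Sum>k\<in>{1..K}. ennreal (q k) * emeasure (group_dist M1 P k) A)"
    unfolding countably_additive_def
  proof safe
    fix F :: "nat \<Rightarrow> _"
    assume F: "range F \<subseteq> sets (point_space M1)" "disjoint_family F"
    have "(\<Sum>i. \<Sum>k\<in>{1..K}. ennreal (q k) * emeasure (group_dist M1 P k) (F i))
        = (\<Sum>k\<in>{1..K}. \<Sum>i. ennreal (q k) * emeasure (group_dist M1 P k) (F i))"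
      by (rule suminf_sum) simp
    also have "\<dots> = (\<Sum>k\<in>{1..K}. ennreal (q k) * emeasure (group_dist M1 P k) (\<Union>i. F i))"
      using F by (simp add: suminf_emeasure)
    finally show "(\<Sum>i. \<Sum>k\<in>{1..K}. ennreal (q k) * emeasure (group_dist M1 P k) (F i))
        = (\<Sum>k\<in>{1..K}. ennreal (q k) * emeasure (group_dist M1 P k) (\<Union>i. F i))" .
  qed
qed

lemma prob_space_test_dist:
  assumes P: "valid_dists M1 K P" and q_nonneg: "\<forall>k\<in>{1..K}. q k \<ge> 0"
    and q_sum: "(\<Sum>k\<in>{1..K}. q k) = 1"
  shows "prob_space (test_dist M1 K q P)"
proof
  have "emeasure (test_dist M1 K q P) (space (test_dist M1 K q P))
      = (\<Sum>k\<in>{1..K}. ennreal (q k) * emeasure (group_dist M1 P k) (space (group_dist M1 P k)))"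
    by (simp add: emeasure_test_dist)
  also have "\<dots> = (\<Sum>k\<in>{1..K}. ennreal (q k))"
  proof (intro sum.cong refl)
    fix k assume "k \<in> {1..K}"
    then have "prob_space (group_dist M1 P k)"
      using P prob_space_group_dist unfolding valid_dists_def by blast
    then show "ennreal (q k) * emeasure (group_dist M1 P k) (space (group_dist M1 P k)) = ennreal (q k)"
      by (metis mult.right_neutral prob_space.emeasure_space_1)
  qed
  also have "\<dots> = 1"
    using q_nonneg q_sum by (subst sum_ennreal) auto
  finally show "emeasure (test_dist M1 K q P) (space (test_dist M1 K q P)) = 1" .
qed

lemma sets_cal_dist [simp]: "sets (cal_dist M1 nk n P) = sets (\<Pi>\<^sub>M i\<in>{..<n}. point_space M1)"
  unfolding cal_dist_def by (rule sets_PiM_cong) auto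

lemma prob_space_cal_dist:
  assumes "valid_dists M1 K P" and "n \<le> (\<Sum>k\<in>{1..K}. nk k)"
  shows "prob_space (cal_dist M1 nk n P)"
  unfolding cal_dist_def
proof (rule prob_space_PiM)
  fix i assume "i \<in> {..<n}"
  then have "grp nk i \<in> {1..K}"
    using assms(2) by (intro grp_mem_groups[of _ _ K]) simp
  then show "prob_space (group_dist M1 P (grp nk i))"
    using assms(1) prob_space_group_dist unfolding valid_dists_def by blast
qed

lemma cal_dist_cong_seen_groups:
  assumes "\<And>k. nk k \<noteq> 0 \<Longrightarrow> P' k = P k" and "n \<le> (\<Sum>k\<in>{1..K}. nk k)"
  shows "cal_dist M1 nk n P' = cal_dist M1 nk n P"
  unfolding cal_dist_def
proof (rule PiM_cong[OF refl])
  fix i assume "i \<in> {..<n}"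
  then have "nk (grp nk i) \<noteq> 0"
    using assms(2) by (intro grp_mem_groups[of _ _ K]) simp
  then show "group_dist M1 P' (grp nk i) = group_dist M1 P (grp nk i)"
    unfolding group_dist_def using assms(1) by simp
qed

lemma nn_integral_weighted_sum_measure:
  fixes N :: "'i \<Rightarrow> 'a measure" and c :: "'i \<Rightarrow> ennreal"
  assumes sets_N: "\<And>k. k \<in> I \<Longrightarrow> sets (N k) = sets M"
    and emeasure_M: "\<And>A. A \<in> sets M \<Longrightarrow> emeasure M A = (\<Sum>k\<in>I. c k * emeasure (N k) A)"
    and f: "f \<in> borel_measurable M"
  shows "integral\<^sup>N M f = (\<Sum>k\<in>I. c k * integral\<^sup>N (N k) f)"
  using f
proof induct
  case (cong f g)
  have "space (N k) = space M" if "k \<in> I" for k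
    using sets_N[OF that] by (rule sets_eq_imp_space_eq)
  with cong show ?case
    by (metis (no_types, lifting) nn_integral_cong sum.cong)
next
  case (set A)
  then show ?case
    using sets_N emeasure_M by (simp cong: sum.cong)
next
  case (mult u a)
  then have "u \<in> borel_measurable (N k)" if "k \<in> I" for k
    using measurable_cong_sets[OF sets_N[OF that] refl] by blast
  with mult show ?case
    by (simp add: nn_integral_cmult sum_distrib_left mult.left_commute cong: sum.cong)
next
  case (add u v)
  then have "u \<in> borel_measurable (N k)" "v \<in> borel_measurable (N k)" if "k \<in> I" for k
    using measurable_cong_sets[OF sets_N[OF that] refl] by blast+
  with add show ?case
    by (simp add: nn_integral_add distrib_left sum.distrib cong: sum.cong)
next
  case (seq U)
  have U_N: "U i \<in> borel_measurable (N k)" if "k \<in> I" for k i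
    using seq(1) measurable_cong_sets[OF sets_N[OF that] refl] by blast
  have Sup_U: "Sup (range U) = (\<lambda>x. SUP i. U i x)"
    by (rule ext) (rule SUP_apply)
  have "integral\<^sup>N M (Sup (range U)) = (SUP i. integral\<^sup>N M (U i))"
    unfolding Sup_U using seq(4,1) by (rule nn_integral_monotone_convergence_SUP)
  also have "\<dots> = (SUP i. \<Sum>k\<in>I. c k * integral\<^sup>N (N k) (U i))"
    using seq(3) by simp
  also have "\<dots> = (\<Sum>k\<in>I. SUP i. c k * integral\<^sup>N (N k) (U i))"
    using seq(4)
    by (intro ennreal_SUP_sum)
       (auto simp: incseq_def le_fun_def intro!: mult_left_mono nn_integral_mono)
  also have "\<dots> = (\<Sum>k\<in>I. c k * integral\<^sup>N (N k) (Sup (range U)))"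
    unfolding Sup_U using seq(4) U_N
    by (simp add: SUP_mult_left_ennreal nn_integral_monotone_convergence_SUP cong: sum.cong)
  finally show ?case .
qed

lemma nn_integral_test_dist:
  assumes "f \<in> borel_measurable (point_space M1)"
  shows "integral\<^sup>N (test_dist M1 K q P) f
           = (\<Sum>k\<in>{1..K}. ennreal (q k) * integral\<^sup>N (group_dist M1 P k) f)"
  using assms
  by (intro nn_integral_weighted_sum_measure)
     (auto simp: emeasure_test_dist measurable_cong_sets[OF sets_test_dist refl])

lemma borel_measurable_emeasure_lborel_section:
  assumes "A \<in> sets (N \<Otimes>\<^sub>M borel)"
  shows "(\<lambda>x. emeasure lborel {y. (x, y) \<in> A}) \<in> borel_measurable N"
proof -
  have "A \<in> sets (N \<Otimes>\<^sub>M lborel)"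
    using assms sets_pair_measure_cong[OF refl sets_lborel] by simp
  then show ?thesis
    using lborel.measurable_emeasure_Pair by (simp add: vimage_def)
qed

lemma borel_measurable_emeasure_lborel_section_assoc:
  assumes "S \<in> sets (N1 \<Otimes>\<^sub>M (N2 \<Otimes>\<^sub>M borel))"
  shows "(\<lambda>(a, b). emeasure lborel {y. (a, (b, y)) \<in> S}) \<in> borel_measurable (N1 \<Otimes>\<^sub>M N2)"
proof -
  let ?assoc = "\<lambda>w. (fst (fst w), (snd (fst w), snd w))"
  have "?assoc \<in> measurable ((N1 \<Otimes>\<^sub>M N2) \<Otimes>\<^sub>M borel) (N1 \<Otimes>\<^sub>M (N2 \<Otimes>\<^sub>M borel))"
    by measurable
  from measurable_sets[OF this assms]
  have "?assoc -` S \<inter> space ((N1 \<Otimes>\<^sub>M N2) \<Otimes>\<^sub>M borel)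
          \<in> sets ((N1 \<Otimes>\<^sub>M N2) \<Otimes>\<^sub>M borel)" .
  from borel_measurable_emeasure_lborel_section[OF this] show ?thesis
    by (rule measurable_cong[THEN iffD1, rotated])
       (auto simp: space_pair_measure intro!: arg_cong[where f = "emeasure lborel"])
qed

lemma emeasure_pair_uniform_measure_le:
  assumes E: "E \<in> sets (M \<Otimes>\<^sub>M borel)" and L: "L > 0"
  shows "emeasure (M \<Otimes>\<^sub>M uniform_measure lborel {0..L}) E
           \<le> (\<integral>\<^sup>+ x. emeasure lborel {y. (x, y) \<in> E} \<partial>M) / ennreal L"
proof -
  let ?U = "uniform_measure lborel {0..L}"
  interpret U: prob_space ?U
    using L by (intro prob_space_uniform_measure) auto
  have E_U: "E \<in> sets (M \<Otimes>\<^sub>M ?U)"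
    using E sets_pair_measure_cong[OF refl sets_uniform_measure] by simp
  have "emeasure (M \<Otimes>\<^sub>M ?U) E = (\<integral>\<^sup>+ x. emeasure ?U (Pair x -` E) \<partial>M)"
    by (rule U.emeasure_pair_measure_alt[OF E_U])
  also have "\<dots> \<le> (\<integral>\<^sup>+ x. emeasure lborel {y. (x, y) \<in> E} / ennreal L \<partial>M)"
  proof (rule nn_integral_mono)
    fix x assume "x \<in> space M"
    then have B: "Pair x -` E \<in> sets borel"
      using sets_Pair1[OF E] by simp
    then have "emeasure ?U (Pair x -` E) = emeasure lborel ({0..L} \<inter> Pair x -` E) / ennreal L"
      using L by simp
    also have "\<dots> \<le> emeasure lborel (Pair x -` E) / ennreal L"
      using B by (intro divide_right_mono_ennreal emeasure_mono) auto
    finally show "emeasure ?U (Pair x -` E) \<le> emeasure lborel {y. (x, y) \<in> E} / ennreal L"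
      by (simp add: vimage_def)
  qed
  also have "\<dots> = (\<integral>\<^sup>+ x. emeasure lborel {y. (x, y) \<in> E} \<partial>M) / ennreal L"
    using borel_measurable_emeasure_lborel_section[OF E] by (rule nn_integral_divide)
  finally show ?thesis .
qed

lemma borel_measurable_emeasure_lborel_section_point_space:
  assumes "A \<in> sets (point_space M1)"
  shows "(\<lambda>p. emeasure lborel {y. (fst p, y) \<in> A}) \<in> borel_measurable (point_space M1)"
  using assms unfolding point_space_def
  by (intro measurable_compose[OF measurable_fst] borel_measurable_emeasure_lborel_section)

definition uniform_response :: "'x measure \<Rightarrow> real \<Rightarrow> ('x \<times> real) measure \<Rightarrow> ('x \<times> real) measure"
  where "uniform_response M1 L Pk = distr Pk M1 fst \<Otimes>\<^sub>M uniform_measure lborel {0..L}"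

lemma sets_uniform_response [simp]: "sets (uniform_response M1 L Pk) = sets (M1 \<Otimes>\<^sub>M borel)"
  unfolding uniform_response_def by (intro sets_pair_measure_cong) auto

lemma prob_space_uniform_response:
  assumes "prob_space Pk" "sets Pk = sets (M1 \<Otimes>\<^sub>M borel)" and "L > 0"
  shows "prob_space (uniform_response M1 L Pk)"
proof -
  have "fst \<in> measurable Pk M1"
    using measurable_cong_sets[OF assms(2) refl] measurable_fst by blast
  then have "prob_space (distr Pk M1 fst)"
    by (rule prob_space.prob_space_distr[OF assms(1)])
  moreover have "prob_space (uniform_measure lborel {0..L})"
    using assms(3) by (intro prob_space_uniform_measure) auto
  ultimately show ?thesis
    unfolding uniform_response_def by (rule prob_space_pair)
qed

lemma valid_dists_uniform_response:
  assumes "valid_dists M1 K P" and "L > 0"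
  shows "valid_dists M1 K (\<lambda>k. if k \<in> Z then uniform_response M1 L (P k) else P k)"
  using assms unfolding valid_dists_def by (auto intro: prob_space_uniform_response)

lemma emeasure_group_dist_uniform_response_le:
  assumes P'k: "P' k = uniform_response M1 L (P k)" and sets_Pk: "sets (P k) = sets (M1 \<Otimes>\<^sub>M borel)"
    and A: "A \<in> sets (point_space M1)" and L: "L > 0"
  shows "emeasure (group_dist M1 P' k) A
           \<le> (\<integral>\<^sup>+ p. emeasure lborel {y. (fst p, y) \<in> A} \<partial>group_dist M1 P k) / ennreal L"
proof -
  let ?M = "distr (P k) M1 fst" and ?h = "\<lambda>x. emeasure lborel {y. (x, y) \<in> A}"
  define E where "E = embed_grp k -` A \<inter> space (uniform_response M1 L (P k))"
  have embed: "embed_grp k \<in> measurable (uniform_response M1 L (P k)) (point_space M1)"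
    by (simp add: measurable_embed_grp)
  have "E \<in> sets (uniform_response M1 L (P k))"
    unfolding E_def using measurable_sets[OF embed A] .
  then have E: "E \<in> sets (?M \<Otimes>\<^sub>M borel)"
    using sets_pair_measure_cong[of ?M M1 borel borel] by simp
  have fst_P: "fst \<in> measurable (P k) M1"
    using measurable_cong_sets[OF sets_Pk refl] measurable_fst by blast
  have h: "(\<lambda>x. ?h (k, x)) \<in> borel_measurable M1"
    using A unfolding point_space_def
    by (intro measurable_compose[OF _ borel_measurable_emeasure_lborel_section]) auto
  have "emeasure (group_dist M1 P' k) A = emeasure (?M \<Otimes>\<^sub>M uniform_measure lborel {0..L}) E"
    unfolding group_dist_def P'k E_def using A embed
    by (simp add: emeasure_distr uniform_response_def)
  also have "\<dots> \<le> (\<integral>\<^sup>+ x. emeasure lborel {y. (x, y) \<in> E} \<partial>?M) / ennreal L"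
    using E L by (rule emeasure_pair_uniform_measure_le)
  also have "(\<integral>\<^sup>+ x. emeasure lborel {y. (x, y) \<in> E} \<partial>?M) = (\<integral>\<^sup>+ x. ?h (k, x) \<partial>?M)"
    by (intro nn_integral_cong arg_cong[where f = "emeasure lborel"])
       (auto simp: E_def embed_grp_def uniform_response_def space_pair_measure)
  also have "\<dots> = (\<integral>\<^sup>+ w. ?h (fst (embed_grp k w)) \<partial>P k)"
    using h fst_P by (simp add: nn_integral_distr embed_grp_def split_beta')
  also have "\<dots> = (\<integral>\<^sup>+ p. ?h (fst p) \<partial>group_dist M1 P k)"
    unfolding group_dist_def
    using measurable_embed_grp[OF sets_Pk] borel_measurable_emeasure_lborel_section_point_space[OF A]
    by (simp add: nn_integral_distr)
  finally show ?thesis .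
qed

lemma emeasure_test_dist_uniform_response_le:
  assumes P: "valid_dists M1 K P" and A: "A \<in> sets (point_space M1)" and L: "L > 0"
  shows "emeasure (test_dist M1 K q (\<lambda>k. if k \<in> Z then uniform_response M1 L (P k) else P k)) A
           \<le> (\<Sum>k\<in>{1..K} - Z. ennreal (q k))
             + (\<integral>\<^sup>+ p. emeasure lborel {y. (fst p, y) \<in> A} \<partial>test_dist M1 K q P) / ennreal L"
proof -
  define P' where "P' k = (if k \<in> Z then uniform_response M1 L (P k) else P k)" for k
  let ?e = "\<lambda>k. ennreal (q k) * emeasure (group_dist M1 P' k) A"
  let ?I = "\<lambda>k. \<integral>\<^sup>+ p. emeasure lborel {y. (fst p, y) \<in> A} \<partial>group_dist M1 P k"
  have seen: "?e k \<le> ennreal (q k)" if "k \<in> {1..K} - Z" for k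
  proof -
    have "prob_space (group_dist M1 P' k)"
      using that P unfolding P'_def valid_dists_def by (auto intro: prob_space_group_dist)
    then show ?thesis
      using prob_space.emeasure_le_1 mult_left_mono[of _ 1 "ennreal (q k)"] by fastforce
  qed
  have unseen: "?e k \<le> ennreal (q k) * (?I k / ennreal L)" if "k \<in> {1..K} \<inter> Z" for k
    using that P A L unfolding valid_dists_def
    by (intro mult_left_mono emeasure_group_dist_uniform_response_le) (auto simp: P'_def)
  have "emeasure (test_dist M1 K q P') A = (\<Sum>k\<in>{1..K} - Z. ?e k) + (\<Sum>k\<in>{1..K} \<inter> Z. ?e k)"
    unfolding emeasure_test_dist[OF A] sum.Int_Diff[OF finite_atLeastAtMost, of ?e _ _ Z]
    by (rule add.commute)
  also have "\<dots> \<le> (\<Sum>k\<in>{1..K} - Z. ennreal (q k)) + (\<Sum>k\<in>{1..K}. ennreal (q k) * (?I k / ennreal L))"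
  proof (rule add_mono)
    show "(\<Sum>k\<in>{1..K} - Z. ?e k) \<le> (\<Sum>k\<in>{1..K} - Z. ennreal (q k))"
      using seen by (rule sum_mono)
    have "(\<Sum>k\<in>{1..K} \<inter> Z. ?e k) \<le> (\<Sum>k\<in>{1..K} \<inter> Z. ennreal (q k) * (?I k / ennreal L))"
      using unseen by (rule sum_mono)
    also have "\<dots> \<le> (\<Sum>k\<in>{1..K}. ennreal (q k) * (?I k / ennreal L))"
      by (rule sum_mono2) auto
    finally show "(\<Sum>k\<in>{1..K} \<inter> Z. ?e k) \<le> \<dots>" .
  qed
  also have "(\<Sum>k\<in>{1..K}. ennreal (q k) * (?I k / ennreal L))
      = (\<integral>\<^sup>+ p. emeasure lborel {y. (fst p, y) \<in> A} \<partial>test_dist M1 K q P) / ennreal L"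
    using borel_measurable_emeasure_lborel_section_point_space[OF A]
    by (simp add: nn_integral_test_dist divide_ennreal_def sum_distrib_right mult.assoc)
  finally show ?thesis unfolding P'_def .
qed

lemma borel_measurable_prediction_set_size:
  assumes C_meas: "{z \<in> space (joint_space M1 n). snd (snd z) \<in> C (fst z) (fst (snd z))}
                     \<in> sets (joint_space M1 n)"
  shows "(\<lambda>z. emeasure lborel (C (fst z) (fst (snd z)))) \<in> borel_measurable (joint_space M1 n)"
proof -
  let ?S = "{z \<in> space (joint_space M1 n). snd (snd z) \<in> C (fst z) (fst (snd z))}"
  let ?PI = "\<Pi>\<^sub>M i\<in>{..<n}. point_space M1" and ?X = "count_space UNIV \<Otimes>\<^sub>M M1"
  have "?S \<in> sets (?PI \<Otimes>\<^sub>M (?X \<Otimes>\<^sub>M borel))"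
    using C_meas unfolding joint_space_def point_space_def .
  from borel_measurable_emeasure_lborel_section_assoc[OF this]
  have "(\<lambda>z. emeasure lborel {y. (fst z, (fst (snd z), y)) \<in> ?S}) \<in> borel_measurable (joint_space M1 n)"
    unfolding joint_space_def point_space_def by measurable
  then show ?thesis
    by (rule measurable_cong[THEN iffD1, rotated])
       (auto simp: joint_space_def space_pair_measure space_point_space
             intro!: arg_cong[where f = "emeasure lborel"])
qed

lemma ennreal_eq_top_if_le_add_divide:
  fixes a b :: real and H :: ennreal
  assumes b: "0 \<le> b" "b < a" and le: "\<And>L. L > 0 \<Longrightarrow> ennreal a \<le> ennreal b + H / ennreal L"
  shows "H = \<infinity>"
proof (rule ccontr)
  assume "H \<noteq> \<infinity>"
  then obtain h where h: "H = ennreal h" "0 \<le> h"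
    by (cases H) auto
  define L where "L = 2 * (h + 1) / (a - b)"
  have L: "L > 0"
    unfolding L_def using b h by simp
  have "ennreal a \<le> ennreal (b + h / L)"
    using le[OF L] b h L by (simp add: divide_ennreal ennreal_plus)
  then have "a \<le> b + h / L"
    using b h L by (subst (asm) ennreal_le_iff) auto
  moreover have "h / L = (a - b) * (h / (2 * (h + 1)))"
    unfolding L_def using b h by (simp add: field_simps)
  moreover have "(a - b) * (h / (2 * (h + 1))) < (a - b) * 1"
    using b h by (intro mult_strict_left_mono) auto
  ultimately show False
    by simp
qed

lemma coverage_bounds_expected_size:
  fixes C :: "(nat \<Rightarrow> (nat \<times> 'x) \<times> real) \<Rightarrow> (nat \<times> 'x) \<Rightarrow> real set"
  assumes q_nonneg: "\<forall>k\<in>{1..K}. q k \<ge> 0" and q_sum: "(\<Sum>k\<in>{1..K}. q k) = 1"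
    and n: "n \<le> (\<Sum>k\<in>{1..K}. nk k)"
    and C_meas: "{z \<in> space (joint_space M1 n). snd (snd z) \<in> C (fst z) (fst (snd z))}
                   \<in> sets (joint_space M1 n)"
    and coverage: "\<forall>P'. valid_dists M1 K P' \<longrightarrow>
        measure (joint_dist M1 K q nk n P')
          {z \<in> space (joint_space M1 n). snd (snd z) \<in> C (fst z) (fst (snd z))} \<ge> 1 - \<alpha>"
    and P: "valid_dists M1 K P" and Z: "\<forall>k\<in>Z. nk k = 0" and L: "L > 0"
  shows "ennreal (1 - \<alpha>) \<le> (\<Sum>k\<in>{1..K} - Z. ennreal (q k))
           + (\<integral>\<^sup>+ z. emeasure lborel (C (fst z) (fst (snd z))) \<partial>joint_dist M1 K q nk n P) / ennreal L"
proof -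
  define S where "S = {z \<in> space (joint_space M1 n). snd (snd z) \<in> C (fst z) (fst (snd z))}"
  define P' where "P' k = (if k \<in> Z then uniform_response M1 L (P k) else P k)" for k
  define D where "D = cal_dist M1 nk n P"
  define T where "T = test_dist M1 K q P"
  define T' where "T' = test_dist M1 K q P'"
  let ?b = "\<Sum>k\<in>{1..K} - Z. ennreal (q k)"
  let ?f = "\<lambda>z. emeasure lborel (C (fst z) (fst (snd z)))"
  have valid_P': "valid_dists M1 K P'"
    unfolding P'_def using P L by (rule valid_dists_uniform_response)
  have cal_P': "cal_dist M1 nk n P' = D"
    unfolding D_def P'_def using Z n by (intro cal_dist_cong_seen_groups) auto
  interpret D: prob_space D
    unfolding D_def using P n by (rule prob_space_cal_dist)
  interpret T: prob_space T
    unfolding T_def using P q_nonneg q_sum by (rule prob_space_test_dist)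
  interpret T': prob_space T'
    unfolding T'_def using valid_P' q_nonneg q_sum by (rule prob_space_test_dist)
  interpret DT': prob_space "D \<Otimes>\<^sub>M T'"
    by (rule prob_space_pair) unfold_locales
  have sets_joint: "sets (D \<Otimes>\<^sub>M T) = sets (joint_space M1 n)" "sets (D \<Otimes>\<^sub>M T') = sets (joint_space M1 n)"
    unfolding D_def T_def T'_def joint_space_def by (auto intro!: sets_pair_measure_cong)
  have S: "S \<in> sets (D \<Otimes>\<^sub>M T')"
    using C_meas sets_joint unfolding S_def by simp
  have f: "?f \<in> borel_measurable (D \<Otimes>\<^sub>M T)"
    unfolding measurable_cong_sets[OF sets_joint(1) refl]
    by (rule borel_measurable_prediction_set_size[OF C_meas])
  have slice: "{y. (fst p, y) \<in> Pair d -` S} = C d (fst p)" if "d \<in> space D" "p \<in> space T" for d p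
    using that sets_eq_imp_space_eq[OF sets_joint(1)]
    by (auto simp: S_def space_pair_measure T_def space_point_space joint_space_def)
  have "1 - \<alpha> \<le> measure (D \<Otimes>\<^sub>M T') S"
    using coverage[rule_format, OF valid_P'] unfolding S_def joint_dist_def cal_P' T'_def .
  then have "ennreal (1 - \<alpha>) \<le> emeasure (D \<Otimes>\<^sub>M T') S"
    by (simp add: DT'.emeasure_eq_measure ennreal_leI)
  also have "\<dots> = (\<integral>\<^sup>+ d. emeasure T' (Pair d -` S) \<partial>D)"
    using S by (rule T'.emeasure_pair_measure_alt)
  also have "\<dots> \<le> (\<integral>\<^sup>+ d. ?b + (\<integral>\<^sup>+ p. emeasure lborel {y. (fst p, y) \<in> Pair d -` S} \<partial>T) / ennreal L \<partial>D)"
    using sets_Pair1[OF S] P L unfolding T'_def T_def P'_def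
    by (intro nn_integral_mono emeasure_test_dist_uniform_response_le) simp_all
  also have "\<dots> = (\<integral>\<^sup>+ d. ?b + (\<integral>\<^sup>+ p. ?f (d, p) \<partial>T) / ennreal L \<partial>D)"
    using slice by (intro nn_integral_cong) (simp cong: nn_integral_cong)
  also have "\<dots> = ?b + (\<integral>\<^sup>+ d. \<integral>\<^sup>+ p. ?f (d, p) \<partial>T \<partial>D) / ennreal L"
    using T.borel_measurable_nn_integral_fst[OF f]
    by (simp add: nn_integral_add nn_integral_divide D.emeasure_space_1)
  also have "(\<integral>\<^sup>+ d. \<integral>\<^sup>+ p. ?f (d, p) \<partial>T \<partial>D) = (\<integral>\<^sup>+ z. ?f z \<partial>joint_dist M1 K q nk n P)"
    unfolding joint_dist_def D_def[symmetric] T_def[symmetric] using f by (rule T.nn_integral_fst)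
  finally show ?thesis .
qed

theorem proposition1:
  fixes M1 :: "'x measure" and K n :: nat and \<alpha> :: real
    and q :: "nat \<Rightarrow> real" and nk :: "nat \<Rightarrow> nat"
    and C :: "(nat \<Rightarrow> (nat \<times> 'x) \<times> real) \<Rightarrow> (nat \<times> 'x) \<Rightarrow> real set"
    and P :: "nat \<Rightarrow> ('x \<times> real) measure"
  assumes K: "K \<ge> 1"
    and alpha: "0 < \<alpha>" "\<alpha> < 1"
    and q_nonneg: "\<forall>k\<in>{1..K}. q k \<ge> 0"
    and q_sum: "(\<Sum>k\<in>{1..K}. q k) = 1"
    and n_def: "n = (\<Sum>k\<in>{1..K}. nk k)"
    and C_meas: "{z \<in> space (joint_space M1 n). snd (snd z) \<in> C (fst z) (fst (snd z))}
                   \<in> sets (joint_space M1 n)"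
    and coverage: "\<forall>P'. valid_dists M1 K P' \<longrightarrow>
        measure (joint_dist M1 K q nk n P')
          {z \<in> space (joint_space M1 n). snd (snd z) \<in> C (fst z) (fst (snd z))} \<ge> 1 - \<alpha>"
    and zero_groups: "(\<Sum>k\<in>{k\<in>{1..K}. nk k = 0}. q k) > \<alpha>"
    and P: "valid_dists M1 K P"
  shows "(\<integral>\<^sup>+ z. emeasure lborel (C (fst z) (fst (snd z))) \<partial>joint_dist M1 K q nk n P) = \<infinity>"
proof -
  define Z where "Z = {k\<in>{1..K}. nk k = 0}"
  let ?Q0 = "\<Sum>k\<in>Z. q k"
  have "Z \<subseteq> {1..K}" and Z_unseen: "\<forall>k\<in>Z. nk k = 0"
    unfolding Z_def by auto
  then have seen_mass: "(\<Sum>k\<in>{1..K} - Z. q k) = 1 - ?Q0"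
    using sum.subset_diff[of Z "{1..K}" q] q_sum by simp
  have "0 \<le> (\<Sum>k\<in>{1..K} - Z. q k)"
    using q_nonneg by (intro sum_nonneg) auto
  then have seen_mass_nonneg: "0 \<le> 1 - ?Q0"
    using seen_mass by simp
  have seen_mass_less: "1 - ?Q0 < 1 - \<alpha>"
    using zero_groups unfolding Z_def by simp
  have "(\<Sum>k\<in>{1..K} - Z. ennreal (q k)) = ennreal (1 - ?Q0)"
    using q_nonneg seen_mass by (subst sum_ennreal) auto
  then have "ennreal (1 - \<alpha>) \<le> ennreal (1 - ?Q0)
      + (\<integral>\<^sup>+ z. emeasure lborel (C (fst z) (fst (snd z))) \<partial>joint_dist M1 K q nk n P) / ennreal L"
    if "L > 0" for L
    using coverage_bounds_expected_size[OF q_nonneg q_sum _ C_meas coverage P Z_unseen that] n_def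
    by simp
  then show ?thesis
    by (rule ennreal_eq_top_if_le_add_divide[OF seen_mass_nonneg seen_mass_less])
qed

end
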